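(* For every finite simple graph $G$, one has $\mathfrak a(G)=-M(G)$, where $M(G)$ is the multiplicity of $-1$ as a root of the independence polynomial $P_G(x)$ (zero if $P_G(-1)\neq 0$). In particular, $\mathfrak a(G)=0$ if and only if $P_G(-1)\neq 0$.
   Context: Let $G$ be a finite simple graph on vertex set $[N]$, $K$ a field, $S=K[x_1,\dots,x_N]$, and $I(G)\subset S$ the edge ideal generated by $x_ix_j$ for $\{i,j\}\in E(G)$. Let $\alpha(G)$ be the independence number of $G$ (which equals $\dim S/I(G)$). The Hilbert series of $S/I(G)$ is written uniquely as $h_G(t)/(1-t)^{\alpha(G)}$ with $h_G(t)\in\mathbb Z[t]$ a polynomial whose leading coefficient is nonzero (the $h$-polynomial). The $\mathfrak a$-invariant is $\mathfrak a(G)=\deg h_G(t)-\alpha(G)$. The independence polynomial is $P_G(x)=\sum_i g_ix^i$, where $g_i$ is the number of independent sets of size $i$. *)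

theory Defs
  imports "HOL-Computational_Algebra.Computational_Algebra"
begin

definition simple_graph :: "nat \<Rightarrow> nat set set \<Rightarrow> bool" where
  "simple_graph N E \<longleftrightarrow> (\<forall>e\<in>E. card e = 2 \<and> e \<subseteq> {1..N})"

definition independent :: "nat \<Rightarrow> nat set set \<Rightarrow> nat set \<Rightarrow> bool" where
  "independent N E S \<longleftrightarrow> S \<subseteq> {1..N} \<and> (\<forall>e\<in>E. \<not> e \<subseteq> S)"

definition indep_number :: "nat \<Rightarrow> nat set set \<Rightarrow> nat" where
  "indep_number N E = Max (card ` {S. independent N E S})"

definition indep_poly :: "nat \<Rightarrow> nat set set \<Rightarrow> int poly" where
  "indep_poly N E = (\<Sum>i\<le>N. monom (int (card {S. independent N E S \<and> card S = i})) i)"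

text \<open>Monomials x^a of S = K[x_1..x_N] (exponent vectors supported on {1..N}) of degree d
  that do not lie in the edge ideal I(G), i.e. are divisible by no x_i x_j with {i,j} in E.
  They form a K-basis of (S/I(G))_d.\<close>
definition standard_monomials :: "nat \<Rightarrow> nat set set \<Rightarrow> nat \<Rightarrow> (nat \<Rightarrow> nat) set" where
  "standard_monomials N E d = {a. (\<forall>i. i \<notin> {1..N} \<longrightarrow> a i = 0) \<and> (\<Sum>i\<in>{1..N}. a i) = d
      \<and> (\<forall>e\<in>E. \<not> (\<forall>i\<in>e. 0 < a i))}"

definition hilbert_fun :: "nat \<Rightarrow> nat set set \<Rightarrow> nat \<Rightarrow> nat" where
  "hilbert_fun N E d = card (standard_monomials N E d)"

definition hilbert_series :: "nat \<Rightarrow> nat set set \<Rightarrow> int fps" where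
  "hilbert_series N E = Abs_fps (\<lambda>d. int (hilbert_fun N E d))"

definition h_poly :: "nat \<Rightarrow> nat set set \<Rightarrow> int poly" where
  "h_poly N E = (THE h. fps_of_poly h = hilbert_series N E * (1 - fps_X) ^ indep_number N E)"

definition a_invariant :: "nat \<Rightarrow> nat set set \<Rightarrow> int" where
  "a_invariant N E = int (degree (h_poly N E)) - int (indep_number N E)"

end

theory Submission
  imports Defs
begin

(* The support of a standard monomial is an independent set F, and the monomials with
   support exactly F have generating function (t/(1-t))^|F|.  Hence
   HS (1-t)^alpha = sum_i g_i t^i (1-t)^(alpha-i) = (1-t)^alpha P_G(t/(1-t)).
   Write P_G = (1+x)^m q with q(-1) <> 0.  Since 1 + t/(1-t) = 1/(1-t), each factor 1+x
   cancels one factor 1-t, so h_G = (1-t)^(alpha-m) q(t/(1-t)), whose coefficient of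
   t^(alpha-m) is (-1)^(alpha-m) q(-1) <> 0.  Hence deg h_G = alpha - m. *)

text \<open>For \<open>degree p \<le> n\<close>, \<open>h_transform n p\<close> is \<open>(1 - t)\<^sup>n p(t / (1 - t))\<close>.\<close>

definition h_transform :: "nat \<Rightarrow> 'a::comm_ring_1 poly \<Rightarrow> 'a poly" where
  "h_transform n p = (\<Sum>i\<le>n. smult (coeff p i) ([:0,1:] ^ i * [:1,-1:] ^ (n - i)))"

lemma h_transform_add: "h_transform n (p + q) = h_transform n p + h_transform n q"
  by (simp add: h_transform_def smult_add_left sum.distrib)

lemma h_transform_one_plus_X_mult:
  fixes q :: "'a::comm_ring_1 poly"
  assumes "degree q \<le> n"
  shows "h_transform (Suc n) ([:1,1:] * q) = h_transform n q"
proof -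
  let ?x = "[:0,1::'a:]" and ?y = "[:1,-1::'a:]"
  have top: "coeff q (Suc n) = 0" using assms by (simp add: coeff_eq_0)
  have A: "h_transform (Suc n) q = (\<Sum>i\<le>n. smult (coeff q i) (?x^i * ?y^(n-i) * ?y))"
    unfolding h_transform_def sum.atMost_Suc top smult_0_left add_0_right
    by (intro sum.cong refl) (simp only: Suc_diff_le atMost_iff power_Suc2 mult.assoc)
  have B: "h_transform (Suc n) (pCons 0 q) = (\<Sum>i\<le>n. smult (coeff q i) (?x^i * ?y^(n-i) * ?x))"
    unfolding h_transform_def sum.atMost_Suc_shift coeff_pCons_0 smult_0_left add_0_left
    by (intro sum.cong refl) (simp only: coeff_pCons_Suc diff_Suc_Suc power_Suc mult_ac)
  have "h_transform (Suc n) ([:1,1:] * q) = h_transform (Suc n) q + h_transform (Suc n) (pCons 0 q)"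
    by (simp add: h_transform_add)
  also have "\<dots> = (\<Sum>i\<le>n. smult (coeff q i) (?x^i * ?y^(n-i) * (?y + ?x)))"
    unfolding A B sum.distrib[symmetric] smult_add_right[symmetric] distrib_left[symmetric]
    by (rule refl)
  also have "?y + ?x = 1" by (simp add: one_pCons)
  finally show ?thesis by (simp add: h_transform_def)
qed

lemma h_transform_one_plus_X_power_mult:
  fixes q :: "'a::comm_ring_1 poly"
  assumes "degree q + k \<le> n"
  shows "h_transform n ([:1,1:] ^ k * q) = h_transform (n - k) q"
  using assms
proof (induction k arbitrary: n)
  case 0
  then show ?case by simp
next
  case (Suc k)
  then obtain m where n: "n = Suc m" by (cases n) auto
  have "degree ([:1,1:] ^ k * q) \<le> degree ([:1,1::'a:] ^ k) + degree q"
    by (rule degree_mult_le)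
  also have "degree ([:1,1::'a:] ^ k) \<le> k"
    using degree_power_le[of "[:1,1::'a:]" k] by simp
  finally have "degree ([:1,1:] ^ k * q) \<le> m" using Suc.prems n by simp
  then have "h_transform n ([:1,1:] ^ Suc k * q) = h_transform m ([:1,1:] ^ k * q)"
    unfolding n power_Suc mult.assoc by (rule h_transform_one_plus_X_mult)
  also have "\<dots> = h_transform (n - Suc k) q" using Suc.IH[of m] Suc.prems n by simp
  finally show ?case .
qed

lemma degree_h_transform_le:
  fixes p :: "'a::idom poly"
  shows "degree (h_transform n p) \<le> n"
  unfolding h_transform_def
  by (intro degree_sum_le order_trans[OF degree_smult_le])
     (simp_all add: degree_mult_eq degree_power_eq)

lemma coeff_h_transform_top:
  fixes p :: "'a::idom poly"
  assumes "degree p \<le> n"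
  shows "coeff (h_transform n p) n = (-1) ^ n * poly p (-1)"
proof -
  have "coeff ([:0,1:] ^ i * [:1,-1:] ^ (n - i)) n = (-1::'a) ^ n * (-1) ^ i" if "i \<le> n" for i
  proof -
    let ?m = "[:0,1::'a:] ^ i * [:1,-1:] ^ (n - i)"
    have "coeff ?m n = lead_coeff ?m"
      using that by (simp add: degree_mult_eq degree_power_eq)
    also have "\<dots> = (-1) ^ (n - i)" by (simp add: lead_coeff_mult lead_coeff_power)
    also have "\<dots> = (-1) ^ n * (-1) ^ i"
      using that by (simp add: minus_one_power_iff)
    finally show ?thesis .
  qed
  then have "coeff (h_transform n p) n = (-1) ^ n * (\<Sum>i\<le>n. coeff p i * (-1) ^ i)"
    unfolding h_transform_def coeff_sum coeff_smult sum_distrib_left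
    by (intro sum.cong refl) (simp add: mult_ac)
  also have "(\<Sum>i\<le>n. coeff p i * (-1) ^ i) = poly p (-1)"
    unfolding poly_altdef using assms
    by (intro sum.mono_neutral_right) (auto simp: coeff_eq_0)
  finally show ?thesis .
qed

lemma degree_h_transform:
  fixes p :: "'a::idom poly"
  assumes "p \<noteq> 0" "degree p \<le> n"
  shows "degree (h_transform n p) = n - order (-1) p"
proof -
  obtain q where q: "p = [:1,1:] ^ order (-1) p * q" "\<not> [:1,1:] dvd q"
    using order_decomp[OF assms(1), of "-1"] by auto
  have "q \<noteq> 0" using q(2) by auto
  have q_at: "poly q (-1) \<noteq> 0" using q(2) by (simp add: poly_eq_0_iff_dvd)
  have "degree p = order (-1) p + degree q"
    by (subst q(1)) (simp add: degree_mult_eq degree_power_eq \<open>q \<noteq> 0\<close>)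
  then have deg_q: "degree q + order (-1) p \<le> n" using assms(2) by simp
  then have "h_transform n p = h_transform (n - order (-1) p) q"
    using h_transform_one_plus_X_power_mult[of q "order (-1) p" n] q(1) by simp
  moreover have "coeff (h_transform (n - order (-1) p) q) (n - order (-1) p) \<noteq> 0"
    using coeff_h_transform_top[of q "n - order (-1) p"] deg_q q_at by simp
  ultimately show ?thesis
    using degree_h_transform_le le_degree by (metis antisym)
qed

lemma fps_of_poly_one_minus_X: "fps_of_poly [:1,-1::'a::comm_ring_1:] = 1 - fps_X"
  by (simp add: fps_of_poly_pCons fps_of_poly_const fps_const_neg)

lemma fps_of_poly_h_transform:
  "fps_of_poly (h_transform n p)
     = (\<Sum>i\<le>n. fps_const (coeff p i) * fps_X ^ i * (1 - fps_X) ^ (n - i))"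
  by (simp add: h_transform_def fps_of_poly_sum fps_of_poly_smult fps_of_poly_mult
      fps_of_poly_power fps_of_poly_one_minus_X mult.assoc)

definition monomials_of_support :: "'a set \<Rightarrow> nat \<Rightarrow> ('a \<Rightarrow> nat) set" where
  "monomials_of_support F d = {a. (\<forall>i. 0 < a i \<longleftrightarrow> i \<in> F) \<and> sum a F = d}"

definition fps_X_div_one_minus_X :: "'a::comm_ring_1 fps" where
  "fps_X_div_one_minus_X = Abs_fps (\<lambda>k. if k = 0 then 0 else 1)"

lemma fps_X_div_one_minus_X_mult:
  "fps_X_div_one_minus_X * (1 - fps_X) = (fps_X :: 'a::comm_ring_1 fps)"
proof -
  have "fps_X_div_one_minus_X * (1 - fps_X)
      = fps_X_div_one_minus_X - fps_X * (fps_X_div_one_minus_X :: 'a fps)"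
    by (simp add: algebra_simps)
  also have "\<dots> = fps_X"
    by (rule fps_ext) (simp add: fps_X_div_one_minus_X_def fps_X_mult_nth)
  finally show ?thesis .
qed

lemma fps_X_div_one_minus_X_power_mult:
  assumes "c \<le> n"
  shows "(fps_X_div_one_minus_X :: 'a::comm_ring_1 fps) ^ c * (1 - fps_X) ^ n
           = fps_X ^ c * (1 - fps_X) ^ (n - c)"
proof -
  have "(1 - fps_X :: 'a fps) ^ n = (1 - fps_X) ^ c * (1 - fps_X) ^ (n - c)"
    using assms by (simp flip: power_add)
  then have "(fps_X_div_one_minus_X :: 'a fps) ^ c * (1 - fps_X) ^ n
      = (fps_X_div_one_minus_X * (1 - fps_X)) ^ c * (1 - fps_X) ^ (n - c)"
    unfolding power_mult_distrib mult.assoc by (rule arg_cong)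
  then show ?thesis by (simp only: fps_X_div_one_minus_X_mult)
qed

lemma finite_monomials_of_support:
  assumes "finite F"
  shows "finite (monomials_of_support F d)"
proof (rule finite_subset)
  show "monomials_of_support F d \<subseteq> {a. \<forall>i. (i \<in> F \<longrightarrow> a i \<in> {0..d}) \<and> (i \<notin> F \<longrightarrow> a i = 0)}"
    unfolding monomials_of_support_def using assms by (auto intro: member_le_sum)
  show "finite {a. \<forall>i. (i \<in> F \<longrightarrow> a i \<in> {0..d}) \<and> (i \<notin> F \<longrightarrow> a i = (0::nat))}"
    by (rule finite_set_of_finite_funs) (use assms in auto)
qed

lemma monomials_of_support_empty: "monomials_of_support {} d = (if d = 0 then {\<lambda>_. 0} else {})"
  unfolding monomials_of_support_def by auto

lemma card_monomials_of_support_insert: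
  assumes "finite F" "x \<notin> F"
  shows "card (monomials_of_support (insert x F) d) = (\<Sum>k<d. card (monomials_of_support F k))"
proof -
  let ?M = monomials_of_support
  have sum_upd: "sum (a(x := v)) F = sum a F" "(\<Sum>i\<in>F. if i = x then v else a i) = sum a F"
    for a v using assms(2) by (auto intro: sum.cong)
  have mem_insert_support: "a \<in> ?M (insert x F) d \<longleftrightarrow>
      0 < a x \<and> a x + sum a F = d \<and> a(x := 0) \<in> ?M F (sum a F)" for a
  proof -
    have "(\<forall>i. 0 < a i \<longleftrightarrow> i \<in> insert x F) \<longleftrightarrow> 0 < a x \<and> (\<forall>i. 0 < (a(x := 0)) i \<longleftrightarrow> i \<in> F)"
      using assms(2) by auto
    then show ?thesis
      using assms by (simp add: monomials_of_support_def sum_upd(2)) blast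
  qed
  have member: "b x = 0" "sum b F = k" if "b \<in> ?M F k" for b k
    using that assms(2) by (auto simp: monomials_of_support_def)
  have "bij_betw (\<lambda>a. (sum a F, a(x := 0))) (?M (insert x F) d) (SIGMA k:{..<d}. ?M F k)"
  proof (rule bij_betw_byWitness[where f' = "\<lambda>(k, b). b(x := d - k)"])
    show "\<forall>a\<in>?M (insert x F) d. (\<lambda>(k, b). b(x := d - k)) (sum a F, a(x := 0)) = a"
      by (auto simp: mem_insert_support)
    show "\<forall>kb\<in>SIGMA k:{..<d}. ?M F k. (\<lambda>a. (sum a F, a(x := 0))) ((\<lambda>(k, b). b(x := d - k)) kb) = kb"
      by (auto simp: sum_upd member)
    show "(\<lambda>a. (sum a F, a(x := 0))) ` ?M (insert x F) d \<subseteq> (SIGMA k:{..<d}. ?M F k)"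
      by (auto simp: mem_insert_support)
    show "(\<lambda>(k, b). b(x := d - k)) ` (SIGMA k:{..<d}. ?M F k) \<subseteq> ?M (insert x F) d"
      by (auto simp: mem_insert_support sum_upd member fun_upd_idem)
  qed
  then have "card (?M (insert x F) d) = card (SIGMA k:{..<d}. ?M F k)"
    by (rule bij_betw_same_card)
  also have "\<dots> = (\<Sum>k<d. card (?M F k))"
    by (rule card_SigmaI) (use finite_monomials_of_support assms in auto)
  finally show ?thesis .
qed

lemma fps_card_monomials_of_support:
  assumes "finite F"
  shows "Abs_fps (\<lambda>d. of_nat (card (monomials_of_support F d)))
           = (fps_X_div_one_minus_X :: 'a::comm_ring_1 fps) ^ card F"
  using assms
proof (induction F rule: finite_induct)
  case empty
  show ?case by (rule fps_ext) (simp add: monomials_of_support_empty)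
next
  case (insert x F)
  let ?A = "Abs_fps (\<lambda>d. of_nat (card (monomials_of_support F d))) :: 'a fps"
  have "Abs_fps (\<lambda>d. of_nat (card (monomials_of_support (insert x F) d))) = ?A * fps_X_div_one_minus_X"
  proof (rule fps_ext)
    fix n
    have "(?A * fps_X_div_one_minus_X) $ n
        = (\<Sum>i=0..n. of_nat (card (monomials_of_support F i)) * (if n - i = 0 then 0 else 1))"
      by (simp add: fps_mult_nth fps_X_div_one_minus_X_def)
    also have "\<dots> = (\<Sum>i<n. of_nat (card (monomials_of_support F i)))"
      by (rule sum.mono_neutral_cong_right) auto
    finally show "Abs_fps (\<lambda>d. of_nat (card (monomials_of_support (insert x F) d))) $ n
        = (?A * fps_X_div_one_minus_X) $ n"
      using card_monomials_of_support_insert[OF insert(1,2), of n] by simp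
  qed
  then show ?case using insert by (simp add: power_Suc2)
qed

lemma finite_independent_sets: "finite {S. independent N E S}"
  by (rule finite_subset[of _ "Pow {1..N}"]) (auto simp: independent_def)

lemma independent_empty:
  assumes "simple_graph N E"
  shows "independent N E {}"
  using assms by (force simp: simple_graph_def independent_def)

lemma card_le_indep_number: "independent N E S \<Longrightarrow> card S \<le> indep_number N E"
  unfolding indep_number_def using finite_independent_sets by (auto intro: Max_ge)

lemma coeff_indep_poly: "coeff (indep_poly N E) i = int (card {S. independent N E S \<and> card S = i})"
proof (cases "i \<le> N")
  case True
  then show ?thesis by (simp add: indep_poly_def coeff_sum coeff_monom)
next
  case False
  have "card S \<le> N" if "independent N E S" for S
    using that card_mono[of "{1..N}" S] by (simp add: independent_def)
  then have "{S. independent N E S \<and> card S = i} = {}" using False by force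
  moreover have "coeff (indep_poly N E) i = 0"
    using False by (simp add: indep_poly_def coeff_sum coeff_monom)
  ultimately show ?thesis by (simp only: card.empty of_nat_0)
qed

lemma indep_poly_nonzero:
  assumes "simple_graph N E"
  shows "indep_poly N E \<noteq> 0"
proof -
  have "{S. independent N E S \<and> card S = 0} = {{}}"
    using independent_empty[OF assms] by (auto simp: independent_def finite_subset)
  then have "coeff (indep_poly N E) 0 = 1" by (simp add: coeff_indep_poly)
  then show ?thesis by auto
qed

lemma degree_indep_poly_le: "degree (indep_poly N E) \<le> indep_number N E"
proof (rule degree_le, intro allI impI)
  fix i assume "indep_number N E < i"
  then have "{S. independent N E S \<and> card S = i} = {}"
    using card_le_indep_number by fastforce
  then show "coeff (indep_poly N E) i = 0" by (simp only: coeff_indep_poly card.empty of_nat_0)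
qed

lemma standard_monomials_eq_UN:
  "standard_monomials N E d = (\<Union>F\<in>{S. independent N E S}. monomials_of_support F d)"
proof (intro equalityI subsetI)
  fix a assume "a \<in> standard_monomials N E d"
  then have outside: "\<And>i. i \<notin> {1..N} \<Longrightarrow> a i = 0" and deg: "sum a {1..N} = d"
    and no_edge: "\<forall>e\<in>E. \<not> (\<forall>i\<in>e. 0 < a i)"
    by (auto simp: standard_monomials_def)
  let ?F = "{i. 0 < a i}"
  have F_sub: "?F \<subseteq> {1..N}" using outside by fastforce
  then have "sum a ?F = sum a {1..N}" by (intro sum.mono_neutral_left) auto
  then have "a \<in> monomials_of_support ?F d" using deg by (simp add: monomials_of_support_def)
  moreover have "independent N E ?F"
    using F_sub no_edge by (auto simp: independent_def subset_eq)
  ultimately show "a \<in> (\<Union>F\<in>{S. independent N E S}. monomials_of_support F d)" by blast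
next
  fix a assume "a \<in> (\<Union>F\<in>{S. independent N E S}. monomials_of_support F d)"
  then obtain F where "independent N E F" and supp: "\<And>i. 0 < a i \<longleftrightarrow> i \<in> F" and "sum a F = d"
    by (auto simp: monomials_of_support_def)
  then have F_sub: "F \<subseteq> {1..N}" and no_edge: "\<forall>e\<in>E. \<not> e \<subseteq> F"
    by (auto simp: independent_def)
  have zero: "a i = 0" if "i \<notin> F" for i
    using that supp by blast
  then have outside: "a i = 0" if "i \<notin> {1..N}" for i
    using that F_sub by blast
  have "sum a F = sum a {1..N}"
    using F_sub zero by (intro sum.mono_neutral_left) auto
  then have "sum a {1..N} = d" using \<open>sum a F = d\<close> by simp
  moreover have "\<not> (\<forall>i\<in>e. 0 < a i)" if "e \<in> E" for e
    using no_edge that supp by auto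
  ultimately show "a \<in> standard_monomials N E d"
    using outside by (simp add: standard_monomials_def)
qed

lemma hilbert_series_eq_sum:
  "hilbert_series N E = (\<Sum>F | independent N E F. fps_X_div_one_minus_X ^ card F)"
proof (rule fps_ext)
  fix d
  have fin: "finite F" if "independent N E F" for F
    using that by (auto simp: independent_def intro: finite_subset)
  have "hilbert_fun N E d = (\<Sum>F | independent N E F. card (monomials_of_support F d))"
    unfolding hilbert_fun_def standard_monomials_eq_UN
  proof (rule card_UN_disjoint)
    show "\<forall>F\<in>{S. independent N E S}. finite (monomials_of_support F d)"
      using fin finite_monomials_of_support by blast
    show "\<forall>F\<in>{S. independent N E S}. \<forall>F'\<in>{S. independent N E S}.
        F \<noteq> F' \<longrightarrow> monomials_of_support F d \<inter> monomials_of_support F' d = {}"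
      by (auto simp: monomials_of_support_def)
  qed (rule finite_independent_sets)
  also have "int \<dots> = (\<Sum>F | independent N E F. (fps_X_div_one_minus_X ^ card F :: int fps) $ d)"
    by (simp add: fin flip: fps_card_monomials_of_support)
  finally show "hilbert_series N E $ d = (\<Sum>F | independent N E F. fps_X_div_one_minus_X ^ card F) $ d"
    by (simp add: hilbert_series_def fps_sum_nth)
qed

lemma hilbert_series_mult_one_minus_X_power:
  "hilbert_series N E * (1 - fps_X) ^ indep_number N E
     = fps_of_poly (h_transform (indep_number N E) (indep_poly N E))"
proof -
  let ?\<alpha> = "indep_number N E"
  let ?I = "{S. independent N E S}"
  let ?t = "\<lambda>i. fps_X ^ i * (1 - fps_X) ^ (?\<alpha> - i) :: int fps"
  have "hilbert_series N E * (1 - fps_X) ^ ?\<alpha> = (\<Sum>F\<in>?I. ?t (card F))"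
    unfolding hilbert_series_eq_sum sum_distrib_right
    by (intro sum.cong refl) (simp add: fps_X_div_one_minus_X_power_mult card_le_indep_number)
  also have "\<dots> = (\<Sum>i\<le>?\<alpha>. \<Sum>F\<in>{F\<in>?I. card F = i}. ?t (card F))"
    by (rule sum.group[symmetric]) (auto simp: finite_independent_sets card_le_indep_number)
  also have "\<dots> = (\<Sum>i\<le>?\<alpha>. of_nat (card {F. independent N E F \<and> card F = i}) * ?t i)"
    by (intro sum.cong refl) simp
  also have "\<dots> = fps_of_poly (h_transform ?\<alpha> (indep_poly N E))"
    by (simp add: fps_of_poly_h_transform coeff_indep_poly fps_of_nat mult.assoc)
  finally show ?thesis .
qed

lemma h_poly_eq_h_transform: "h_poly N E = h_transform (indep_number N E) (indep_poly N E)"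
  unfolding h_poly_def hilbert_series_mult_one_minus_X_power
  by (simp add: fps_of_poly_eq_iff)

lemma a_invariant_eq_neg_order:
  assumes "simple_graph N E"
  shows "a_invariant N E = - int (order (-1) (indep_poly N E))"
proof -
  have P: "indep_poly N E \<noteq> 0" by (rule indep_poly_nonzero[OF assms])
  have "order (-1) (indep_poly N E) \<le> indep_number N E"
    using order_degree[OF P] degree_indep_poly_le by (rule order_trans)
  then show ?thesis
    by (simp add: a_invariant_def h_poly_eq_h_transform
        degree_h_transform[OF P degree_indep_poly_le])
qed

theorem corollary1p3:
  fixes N :: nat and E :: "nat set set"
  assumes "simple_graph N E"
  shows "a_invariant N E = - int (order (-1) (indep_poly N E))
         \<and> (a_invariant N E = 0 \<longleftrightarrow> poly (indep_poly N E) (-1) \<noteq> 0)"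
  using a_invariant_eq_neg_order[OF assms] order_eq_0_iff[OF indep_poly_nonzero[OF assms]]
  by simp

end
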